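(* Let $v$ be a node that is seed-infected at time step $t$ during the execution of the Follow algorithm (described in the context), and let $e$ be an edge adjacent to $v$ with $\lambda(e)\in\{t+1,\dots,t+\delta\}$. Then during the execution there is a round with a successful infection via $e$ (from $v$ or to $v$).
   Context: A temporal graph $\mathcal G=(V,E,\lambda)$ with lifetime $T_{\max}$ consists of a finite undirected static graph $(V,E)$ and a labeling $\lambda:E\to\{1,\dots,T_{\max}\}$; edge $e$ is present only at time $\lambda(e)$. Infection model with parameter $\delta\in\mathbb N^+$: a seed $(u,t)$ makes $u$ infected at time $t$; otherwise a susceptible node $u$ becomes infected at time $t$ iff some neighbour $v$ infectious at time $t$ has $\lambda(uv)=t$ (exactly one infector recorded if several exist). A node infected at time $t$ is infectious at times $t+1,\dots,t+\delta$ and resistant afterwards. Each round, the Discoverer submits seed infections and observes an infection log (triples $(u,v,t)$: $u$ infected $v$ at time $t$). Subroutine Explore$(u,t)$: for each $t'\in\{t-\delta-1,t-1,t\}$, if no round with seed $(u,t')$ was performed, perform a round with the single seed $(u,t')$ and record it; then for each newly observed successful infection along an edge $uv$ at time $t''$, call Explore$(v,t'')$. Algorithm Follow: pick any node $v_0$; for each $i\in[0,\lceil T_{\max}/\delta\rceil]$ perform a round with single seed $(v_0,i\delta)$; for each edge $e=v_0u$ along which an infection succeeds, call Explore$(u,\lambda(e))$. *)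

theory Defs
  imports Complex_Main
begin

text \<open>Times are integers
  (seeds may be placed at times <= 0, e.g. t - delta - 1).\<close>

definition temporal_graph :: "'v set \<Rightarrow> 'v set set \<Rightarrow> ('v set \<Rightarrow> int) \<Rightarrow> int \<Rightarrow> bool" where
  "temporal_graph V E lam Tmax \<longleftrightarrow> finite V \<and>
     (\<forall>e\<in>E. \<exists>u w. u \<in> V \<and> w \<in> V \<and> u \<noteq> w \<and> e = {u, w}) \<and>
     (\<forall>e\<in>E. 1 \<le> lam e \<and> lam e \<le> Tmax)"

definition infectious :: "int \<Rightarrow> ('v \<Rightarrow> int option) \<Rightarrow> 'v \<Rightarrow> int \<Rightarrow> bool" where
  "infectious \<delta> f u \<tau> \<longleftrightarrow> (\<exists>\<tau>'. f u = Some \<tau>' \<and> \<tau>' < \<tau> \<and> \<tau> \<le> \<tau>' + \<delta>)"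

definition can_infect :: "'v set set \<Rightarrow> ('v set \<Rightarrow> int) \<Rightarrow> int \<Rightarrow> ('v \<Rightarrow> int option)
    \<Rightarrow> 'v \<Rightarrow> 'v \<Rightarrow> int \<Rightarrow> bool" where
  "can_infect E lam \<delta> f u w \<tau> \<longleftrightarrow> infectious \<delta> f u \<tau> \<and> {u, w} \<in> E \<and> lam {u, w} = \<tau>"

text \<open>f is the infection-time function of the round with single seed (s,t0):
  the seed is infected at t0; any other node w is infected at time tau iff it is
  still susceptible at tau (not infected earlier, i.e. no earlier infection
  opportunity) and some infectious neighbour meets it via an edge labelled tau.\<close>
definition infection_run :: "'v set set \<Rightarrow> ('v set \<Rightarrow> int) \<Rightarrow> int \<Rightarrow> 'v \<times> int
    \<Rightarrow> ('v \<Rightarrow> int option) \<Rightarrow> bool" where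
  "infection_run E lam \<delta> s f \<longleftrightarrow> f (fst s) = Some (snd s) \<and>
     (\<forall>w \<tau>. w \<noteq> fst s \<longrightarrow>
        (f w = Some \<tau> \<longleftrightarrow>
           (\<exists>u. can_infect E lam \<delta> f u w \<tau>) \<and>
           (\<forall>\<tau>2 < \<tau>. \<not> (\<exists>u. can_infect E lam \<delta> f u w \<tau>2))))"

text \<open>L is a possible infection log of the round with single seed s: a set of
  triples (u, w, tau) ("u infected w at time tau"), recording exactly one
  (arbitrary) valid infector for every non-seed node that gets infected.\<close>
definition valid_log :: "'v set set \<Rightarrow> ('v set \<Rightarrow> int) \<Rightarrow> int \<Rightarrow> 'v \<times> int
    \<Rightarrow> ('v \<times> 'v \<times> int) set \<Rightarrow> bool" where
  "valid_log E lam \<delta> s L \<longleftrightarrow> (\<exists>f. infection_run E lam \<delta> s f \<and>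
     (\<forall>(u, w, \<tau>) \<in> L. w \<noteq> fst s \<and> f w = Some \<tau> \<and> can_infect E lam \<delta> f u w \<tau>) \<and>
     (\<forall>w \<tau>. w \<noteq> fst s \<and> f w = Some \<tau> \<longrightarrow> (\<exists>!u. (u, w, \<tau>) \<in> L)))"

text \<open>Lg s is the log observed for the round with single seed s.  In Follow no seed
  is ever used twice (Explore skips already performed seeds), so the (adversarial)
  choice of recorded infectors can be described by a fixed function Lg.\<close>

definition init_times :: "int \<Rightarrow> int \<Rightarrow> int set" where
  "init_times Tmax \<delta> = {i * \<delta> | i. 0 \<le> i \<and> i \<le> \<lceil>real_of_int Tmax / real_of_int \<delta>\<rceil>}"

definition explore_times :: "int \<Rightarrow> int \<Rightarrow> int set" where
  "explore_times \<delta> t = {t - \<delta> - 1, t - 1, t}"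

text \<open>Calls of Explore(u,t) made during the execution of Follow from v0.\<close>
inductive explore_called :: "int \<Rightarrow> int \<Rightarrow> 'v \<Rightarrow> ('v \<times> int \<Rightarrow> ('v \<times> 'v \<times> int) set)
    \<Rightarrow> 'v \<times> int \<Rightarrow> bool"
  for Tmax \<delta> v0 Lg where
  init: "t0 \<in> init_times Tmax \<delta> \<Longrightarrow> (v0, u, \<tau>) \<in> Lg (v0, t0)
           \<Longrightarrow> explore_called Tmax \<delta> v0 Lg (u, \<tau>)"
| step: "explore_called Tmax \<delta> v0 Lg (u, t) \<Longrightarrow> t' \<in> explore_times \<delta> t
           \<Longrightarrow> (u, w, \<tau>) \<in> Lg (u, t') \<Longrightarrow> explore_called Tmax \<delta> v0 Lg (w, \<tau>)"

definition performed :: "int \<Rightarrow> int \<Rightarrow> 'v \<Rightarrow> ('v \<times> int \<Rightarrow> ('v \<times> 'v \<times> int) set)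
    \<Rightarrow> 'v \<times> int \<Rightarrow> bool" where
  "performed Tmax \<delta> v0 Lg s \<longleftrightarrow>
     (\<exists>t0 \<in> init_times Tmax \<delta>. s = (v0, t0)) \<or>
     (\<exists>u t t'. explore_called Tmax \<delta> v0 Lg (u, t) \<and> t' \<in> explore_times \<delta> t \<and> s = (u, t'))"

end

theory Submission
  imports Defs
begin

(* In the round seeded at (v, t) the neighbour w across e = {v, w} is infected no later than
   lam e.  If the log does not record this infection as coming from v, it records some earlier
   infection (v, p, tau) with t < tau < lam e: either w itself was infected by v before lam e, or
   p is the first node on the logged infection chain of w.  Explore(p, tau) then seeds p at
   tau - 1; in that round nobody but p is infectious at time tau, so v is logged as infected by p
   at tau and Explore(v, tau) seeds v at tau.  Since lam e <= t + delta < tau + delta, induction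
   on lam e - t concludes. *)

definition run_log :: "'v set set \<Rightarrow> ('v set \<Rightarrow> int) \<Rightarrow> int \<Rightarrow> 'v \<times> int
    \<Rightarrow> ('v \<Rightarrow> int option) \<Rightarrow> ('v \<times> 'v \<times> int) set \<Rightarrow> bool" where
  "run_log E lam \<delta> s f L \<longleftrightarrow>
     (\<forall>(u, w, \<tau>) \<in> L. w \<noteq> fst s \<and> f w = Some \<tau> \<and> can_infect E lam \<delta> f u w \<tau>) \<and>
     (\<forall>w \<tau>. w \<noteq> fst s \<and> f w = Some \<tau> \<longrightarrow> (\<exists>!u. (u, w, \<tau>) \<in> L))"

lemma valid_log_iff_run_log:
  "valid_log E lam \<delta> s L \<longleftrightarrow> (\<exists>f. infection_run E lam \<delta> s f \<and> run_log E lam \<delta> s f L)"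
  unfolding valid_log_def run_log_def ..

lemma run_log_entryD:
  assumes "run_log E lam \<delta> (v, t0) f L" "(u, w, \<tau>) \<in> L"
  shows "w \<noteq> v" "f w = Some \<tau>" "can_infect E lam \<delta> f u w \<tau>"
  using assms unfolding run_log_def by auto

lemma run_log_infector:
  assumes "run_log E lam \<delta> (v, t0) f L" "w \<noteq> v" "f w = Some \<tau>"
  obtains u where "(u, w, \<tau>) \<in> L"
  using assms unfolding run_log_def by fastforce

lemma can_infectE:
  assumes "can_infect E lam \<delta> f u w \<tau>"
  obtains \<tau>' where "f u = Some \<tau>'" "\<tau>' < \<tau>" "{u, w} \<in> E" "lam {u, w} = \<tau>"
  using assms unfolding can_infect_def infectious_def by auto

lemma infection_run_seed: "infection_run E lam \<delta> (v, t0) f \<Longrightarrow> f v = Some t0"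
  unfolding infection_run_def by simp

lemma infection_run_seed_can_infect:
  assumes "infection_run E lam \<delta> (v, t0) f" "{v, w} \<in> E" "t0 < lam {v, w}" "lam {v, w} \<le> t0 + \<delta>"
  shows "can_infect E lam \<delta> f v w (lam {v, w})"
  using infection_run_seed[OF assms(1)] assms(2-) unfolding can_infect_def infectious_def by auto

lemma infection_run_infector:
  assumes "infection_run E lam \<delta> (v, t0) f" "w \<noteq> v" "f w = Some \<tau>"
  obtains u where "can_infect E lam \<delta> f u w \<tau>"
  using assms unfolding infection_run_def by fastforce

lemma infection_run_time_pos:
  assumes "infection_run E lam \<delta> (v, t0) f" "\<forall>e\<in>E. 1 \<le> lam e" "w \<noteq> v" "f w = Some \<tau>"
  shows "1 \<le> \<tau>"
proof -
  obtain u where "can_infect E lam \<delta> f u w \<tau>"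
    using infection_run_infector[OF assms(1,3,4)] .
  then show ?thesis using assms(2) by (auto elim: can_infectE)
qed

lemma infection_run_after_seed:
  assumes run: "infection_run E lam \<delta> (v, t0) f" and pos: "\<forall>e\<in>E. 1 \<le> lam e"
  shows "w \<noteq> v \<Longrightarrow> f w = Some \<tau> \<Longrightarrow> t0 < \<tau>"
proof (induction "nat \<tau>" arbitrary: w \<tau> rule: less_induct)
  case less
  obtain u where "can_infect E lam \<delta> f u w \<tau>"
    using infection_run_infector[OF run less.prems] .
  then obtain \<tau>' where u: "f u = Some \<tau>'" "\<tau>' < \<tau>" by (rule can_infectE)
  show ?case
  proof (cases "u = v")
    case True
    then show ?thesis using u infection_run_seed[OF run] by simp
  next
    case False
    have "1 \<le> \<tau>'" using infection_run_time_pos[OF run pos False u(1)] .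
    then have "nat \<tau>' < nat \<tau>" using u(2) by simp
    then show ?thesis using less.hyps False u by fastforce
  qed
qed

lemma infection_run_first_opportunity:
  assumes run: "infection_run E lam \<delta> (v, t0) f" and pos: "\<forall>e\<in>E. 1 \<le> lam e"
    and "w \<noteq> v" and opportunity: "can_infect E lam \<delta> f u w T"
  obtains \<tau> where "f w = Some \<tau>" "\<tau> \<le> T"
proof -
  define S where "S = {\<tau>. (\<exists>u. can_infect E lam \<delta> f u w \<tau>) \<and> \<tau> \<in> {1..T}}"
  have opportunity_pos: "1 \<le> \<tau>" if "can_infect E lam \<delta> f u' w \<tau>" for u' \<tau>
    using that pos by (auto elim: can_infectE)
  have "T \<in> S" using opportunity opportunity_pos unfolding S_def by auto
  moreover have "finite S" unfolding S_def by auto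
  ultimately have min: "Min S \<in> S" "Min S \<le> T" by (metis Min_in Min_le empty_iff)+
  have "\<not> (\<exists>u. can_infect E lam \<delta> f u w \<tau>)" if "\<tau> < Min S" for \<tau>
  proof
    assume "\<exists>u. can_infect E lam \<delta> f u w \<tau>"
    then have "\<tau> \<in> S" using that min opportunity_pos unfolding S_def by fastforce
    then show False using that \<open>finite S\<close> by (meson Min_le not_le)
  qed
  moreover have "\<exists>u. can_infect E lam \<delta> f u w (Min S)" using min(1) unfolding S_def by blast
  ultimately have "f w = Some (Min S)"
    using run \<open>w \<noteq> v\<close> unfolding infection_run_def by simp
  then show thesis using that min(2) by blast
qed

lemma run_log_seed_child_before:
  assumes run: "infection_run E lam \<delta> (v, t0) f" and log: "run_log E lam \<delta> (v, t0) f L"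
    and pos: "\<forall>e\<in>E. 1 \<le> lam e"
  shows "w \<noteq> v \<Longrightarrow> f w = Some \<sigma> \<Longrightarrow> \<exists>p \<tau>. (v, p, \<tau>) \<in> L \<and> \<tau> \<le> \<sigma>"
proof (induction "nat \<sigma>" arbitrary: w \<sigma> rule: less_induct)
  case less
  obtain u where u: "(u, w, \<sigma>) \<in> L" using run_log_infector[OF log less.prems] .
  show ?case
  proof (cases "u = v")
    case True
    then show ?thesis using u by blast
  next
    case False
    obtain \<sigma>' where su: "f u = Some \<sigma>'" "\<sigma>' < \<sigma>"
      using run_log_entryD(3)[OF log u] by (rule can_infectE)
    have "1 \<le> \<sigma>'" using infection_run_time_pos[OF run pos False su(1)] .
    then have "nat \<sigma>' < nat \<sigma>" using su(2) by simp
    then show ?thesis using less.hyps False su by fastforce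
  qed
qed

lemma run_log_early_seed_child:
  assumes run: "infection_run E lam \<delta> (v, t0) f" and log: "run_log E lam \<delta> (v, t0) f L"
    and pos: "\<forall>e\<in>E. 1 \<le> lam e" and edge: "{v, w} \<in> E" "w \<noteq> v"
    and window: "t0 < lam {v, w}" "lam {v, w} \<le> t0 + \<delta>"
    and unlogged: "(v, w, lam {v, w}) \<notin> L"
  shows "\<exists>p \<tau>. (v, p, \<tau>) \<in> L \<and> \<tau> < lam {v, w}"
proof -
  obtain \<tau> where fw: "f w = Some \<tau>" "\<tau> \<le> lam {v, w}"
    using infection_run_first_opportunity[OF run pos \<open>w \<noteq> v\<close>
        infection_run_seed_can_infect[OF run edge(1) window]] .
  obtain u where u: "(u, w, \<tau>) \<in> L" using run_log_infector[OF log \<open>w \<noteq> v\<close> fw(1)] .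
  show ?thesis
  proof (cases "u = v")
    case True
    then have "\<tau> \<noteq> lam {v, w}" using u unlogged by blast
    then show ?thesis using True u fw(2) by force
  next
    case False
    obtain \<sigma> where su: "f u = Some \<sigma>" "\<sigma> < \<tau>"
      using run_log_entryD(3)[OF log u] by (rule can_infectE)
    then show ?thesis using run_log_seed_child_before[OF run log pos False su(1)] fw(2) by force
  qed
qed

lemma valid_log_early_seed_child:
  assumes "valid_log E lam \<delta> (v, t0) L" "\<forall>e\<in>E. 1 \<le> lam e" "{v, w} \<in> E" "w \<noteq> v"
    "t0 < lam {v, w}" "lam {v, w} \<le> t0 + \<delta>" "(v, w, lam {v, w}) \<notin> L"
  shows "\<exists>p \<tau>. (v, p, \<tau>) \<in> L \<and> \<tau> < lam {v, w}"
proof -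
  obtain f where "infection_run E lam \<delta> (v, t0) f" "run_log E lam \<delta> (v, t0) f L"
    using assms(1) unfolding valid_log_iff_run_log by blast
  then show ?thesis by (rule run_log_early_seed_child[OF _ _ assms(2-)])
qed

lemma valid_log_entryD:
  assumes log: "valid_log E lam \<delta> (v, t0) L" and pos: "\<forall>e\<in>E. 1 \<le> lam e"
    and entry: "(u, w, \<tau>) \<in> L"
  shows "w \<noteq> v" "{u, w} \<in> E" "lam {u, w} = \<tau>" "t0 < \<tau>"
proof -
  obtain f where run: "infection_run E lam \<delta> (v, t0) f" and rlog: "run_log E lam \<delta> (v, t0) f L"
    using log unfolding valid_log_iff_run_log by blast
  show "w \<noteq> v" using run_log_entryD(1)[OF rlog entry] .
  then show "t0 < \<tau>" using infection_run_after_seed[OF run pos] run_log_entryD(2)[OF rlog entry] by blast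
  show "{u, w} \<in> E" "lam {u, w} = \<tau>"
    using run_log_entryD(3)[OF rlog entry] by (auto elim: can_infectE)
qed

lemma valid_log_reverse_infection:
  assumes log: "valid_log E lam \<delta> (p, \<tau> - 1) L" and pos: "\<forall>e\<in>E. 1 \<le> lam e"
    and "\<delta> \<ge> 1" and edge: "{p, v} \<in> E" "lam {p, v} = \<tau>" "v \<noteq> p"
  shows "(p, v, \<tau>) \<in> L"
proof -
  obtain f where run: "infection_run E lam \<delta> (p, \<tau> - 1) f" and rlog: "run_log E lam \<delta> (p, \<tau> - 1) f L"
    using log unfolding valid_log_iff_run_log by blast
  have late: "\<tau> - 1 < \<sigma>" if "u \<noteq> p" "f u = Some \<sigma>" for u \<sigma>
    using infection_run_after_seed[OF run pos that] .
  obtain \<tau>' where "f v = Some \<tau>'" "\<tau>' \<le> \<tau>"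
    using infection_run_first_opportunity[OF run pos \<open>v \<noteq> p\<close>
        infection_run_seed_can_infect[OF run edge(1)]] edge(2) \<open>\<delta> \<ge> 1\<close> by auto
  with late[OF \<open>v \<noteq> p\<close>] have fv: "f v = Some \<tau>" by force
  obtain u where u: "(u, v, \<tau>) \<in> L" using run_log_infector[OF rlog \<open>v \<noteq> p\<close> fv] .
  obtain \<sigma> where "f u = Some \<sigma>" "\<sigma> < \<tau>"
    using run_log_entryD(3)[OF rlog u] by (rule can_infectE)
  then have "u = p" using late by force
  then show ?thesis using u by simp
qed

lemma explore_called_of_performed:
  "performed Tmax \<delta> v0 Lg (v, t) \<Longrightarrow> (v, p, \<tau>) \<in> Lg (v, t) \<Longrightarrow> explore_called Tmax \<delta> v0 Lg (p, \<tau>)"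
  unfolding performed_def by (auto intro: explore_called.intros)

lemma performed_of_explore_called:
  "explore_called Tmax \<delta> v0 Lg (u, \<tau>) \<Longrightarrow> t \<in> explore_times \<delta> \<tau> \<Longrightarrow> performed Tmax \<delta> v0 Lg (u, t)"
  unfolding performed_def by blast

lemma performed_reseed_at_child:
  assumes pos: "\<forall>e\<in>E. 1 \<le> lam e" and "\<delta> \<ge> 1" and logs: "\<forall>s. valid_log E lam \<delta> s (Lg s)"
    and performed: "performed Tmax \<delta> v0 Lg (v, t)" and child: "(v, p, \<tau>) \<in> Lg (v, t)"
  shows "performed Tmax \<delta> v0 Lg (v, \<tau>)"
proof -
  have "p \<noteq> v" "{v, p} \<in> E" "lam {v, p} = \<tau>"
    using valid_log_entryD[OF logs[rule_format] pos child] by auto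
  then have "(p, v, \<tau>) \<in> Lg (p, \<tau> - 1)"
    using valid_log_reverse_infection[OF logs[rule_format] pos \<open>\<delta> \<ge> 1\<close>] by (simp add: insert_commute)
  moreover have "explore_called Tmax \<delta> v0 Lg (p, \<tau>)"
    using explore_called_of_performed[OF performed child] .
  ultimately have "explore_called Tmax \<delta> v0 Lg (v, \<tau>)"
    by (auto intro: explore_called.step simp: explore_times_def)
  then show ?thesis by (rule performed_of_explore_called) (simp add: explore_times_def)
qed

lemma performed_logs_window_edge:
  assumes pos: "\<forall>e\<in>E. 1 \<le> lam e" and "\<delta> \<ge> 1" and logs: "\<forall>s. valid_log E lam \<delta> s (Lg s)"
    and edge: "{v, w} \<in> E" "w \<noteq> v"
  shows "performed Tmax \<delta> v0 Lg (v, t) \<Longrightarrow> t < lam {v, w} \<Longrightarrow> lam {v, w} \<le> t + \<delta> \<Longrightarrow>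
    \<exists>t'. performed Tmax \<delta> v0 Lg (v, t') \<and> (v, w, lam {v, w}) \<in> Lg (v, t')"
proof (induction "nat (lam {v, w} - t)" arbitrary: t rule: less_induct)
  case less
  show ?case
  proof (cases "(v, w, lam {v, w}) \<in> Lg (v, t)")
    case True
    then show ?thesis using less.prems(1) by blast
  next
    case False
    obtain p \<tau> where child: "(v, p, \<tau>) \<in> Lg (v, t)" and "\<tau> < lam {v, w}"
      using valid_log_early_seed_child[OF logs[rule_format] pos edge less.prems(2,3) False] by blast
    moreover have "t < \<tau>" using valid_log_entryD(4)[OF logs[rule_format] pos child] .
    moreover have "performed Tmax \<delta> v0 Lg (v, \<tau>)"
      using performed_reseed_at_child[OF pos \<open>\<delta> \<ge> 1\<close> logs less.prems(1) child] .
    ultimately show ?thesis using less.hyps less.prems(3) by force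
  qed
qed

theorem mainTheorem8:
  fixes V :: "'v set" and E :: "'v set set" and lam :: "'v set \<Rightarrow> int"
    and Tmax \<delta> :: int and v0 :: 'v
    and Lg :: "'v \<times> int \<Rightarrow> ('v \<times> 'v \<times> int) set"
    and v :: 'v and t :: int and e :: "'v set"
  assumes "temporal_graph V E lam Tmax"
    and "\<delta> \<ge> 1"
    and "v0 \<in> V"
    and "\<forall>s. valid_log E lam \<delta> s (Lg s)"
    and "performed Tmax \<delta> v0 Lg (v, t)"
    and "e \<in> E" and "v \<in> e"
    and "t + 1 \<le> lam e" and "lam e \<le> t + \<delta>"
  shows "\<exists>s w. performed Tmax \<delta> v0 Lg s \<and> e = {v, w} \<and>
           ((v, w, lam e) \<in> Lg s \<or> (w, v, lam e) \<in> Lg s)"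
proof -
  have pos: "\<forall>e\<in>E. 1 \<le> lam e" using assms(1) unfolding temporal_graph_def by blast
  obtain a b where "a \<noteq> b" "e = {a, b}" using assms(1,6) unfolding temporal_graph_def by blast
  then obtain w where w: "e = {v, w}" "w \<noteq> v" using assms(7) by (auto simp: insert_commute)
  then obtain t' where "performed Tmax \<delta> v0 Lg (v, t')" "(v, w, lam e) \<in> Lg (v, t')"
    using performed_logs_window_edge[OF pos assms(2,4)] assms(5,6,8,9) by fastforce
  then show ?thesis using w(1) by blast
qed

end
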